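(* In the setting of the context, there is a constant $c(\beta)$ such that the following holds: for all configurations $\sigma,\sigma'\in\Omega$ (depending on $n$) with $\bm S(\sigma)=\bm S(\sigma')$, there is a coupling $(\sigma_t,\sigma'_t)_{t\ge0}$ of two Glauber dynamics started at $\sigma$ and $\sigma'$ such that, with $\tau:=\min\{t\ge0:\sigma_t=\sigma'_t\}$, \[ \limsup_{n\to\infty}\mathbb P_{\sigma,\sigma'}\big(\tau>c(\beta)\,n\log n\big)=0. \]
   Context: Fix $m\ge1$, proportions $p_1,\dots,p_m>0$ with $\sum_ip_i=1$, a symmetric matrix $\mathbf K=(k_{ij})$ with all $k_{ij}>0$, and any inverse temperature $\beta\ge0$; $n$ ranges over positive integers with $np_i\in\mathbb N$. The vertex set $V=\{1,\dots,n\}$ is partitioned into blocks $G_1,\dots,G_m$ with $|G_i|=np_i$; for $v\in G_i,w\in G_j$ put $K(v,w)=k_{ij}/n$. The Glauber dynamics on $\Omega=\{-1,+1\}^V$ picks at each step a uniform random vertex $v$ and sets its spin to $\pm1$ with probability $\frac{1\pm\tanh(\beta S^v)}2$, $S^v=\sum_{w\ne v}K(v,w)\sigma(w)$. For $\sigma\in\Omega$, $\bm S(\sigma)=(S^{(1)}(\sigma),\dots,S^{(m)}(\sigma))$ with $S^{(i)}(\sigma)=\frac1n\sum_{v\in G_i}\sigma(v)$. *)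

theory Defs
  imports "HOL-Probability.Probability"
begin

text \<open>Vertices are 0,...,n-1. A configuration is a function nat => int which takes
values +1/-1 on the vertices and 0 elsewhere.\<close>

type_synonym config = "nat \<Rightarrow> int"

definition config_space :: "nat \<Rightarrow> config set" where
  "config_space n = {\<sigma>. (\<forall>v<n. \<sigma> v = 1 \<or> \<sigma> v = -1) \<and> (\<forall>v\<ge>n. \<sigma> v = 0)}"

definition admissible :: "nat \<Rightarrow> (nat \<Rightarrow> real) \<Rightarrow> nat \<Rightarrow> bool" where
  "admissible m p n \<longleftrightarrow> n > 0 \<and> (\<forall>i<m. real n * p i \<in> \<nat>)"

text \<open>A block assignment G (vertex v lies in block G v, blocks 0,...,m-1) with |G_i| = n p_i.\<close>
definition block_partition :: "nat \<Rightarrow> (nat \<Rightarrow> real) \<Rightarrow> nat \<Rightarrow> (nat \<Rightarrow> nat) \<Rightarrow> bool" where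
  "block_partition m p n G \<longleftrightarrow>
     (\<forall>v<n. G v < m) \<and> (\<forall>i<m. real (card {v. v < n \<and> G v = i}) = real n * p i)"

definition interaction :: "(nat \<Rightarrow> nat \<Rightarrow> real) \<Rightarrow> nat \<Rightarrow> (nat \<Rightarrow> nat) \<Rightarrow> nat \<Rightarrow> nat \<Rightarrow> real" where
  "interaction k n G v w = k (G v) (G w) / real n"

definition local_field :: "(nat \<Rightarrow> nat \<Rightarrow> real) \<Rightarrow> nat \<Rightarrow> (nat \<Rightarrow> nat) \<Rightarrow> config \<Rightarrow> nat \<Rightarrow> real" where
  "local_field k n G \<sigma> v = (\<Sum>w\<in>{0..<n} - {v}. interaction k n G v w * real_of_int (\<sigma> w))"

definition glauber_step ::
  "real \<Rightarrow> (nat \<Rightarrow> nat \<Rightarrow> real) \<Rightarrow> nat \<Rightarrow> (nat \<Rightarrow> nat) \<Rightarrow> config \<Rightarrow> config pmf" where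
  "glauber_step \<beta> k n G \<sigma> =
     bind_pmf (pmf_of_set {0..<n}) (\<lambda>v.
       map_pmf (\<lambda>b. \<sigma>(v := (if b then 1 else -1)))
         (bernoulli_pmf ((1 + tanh (\<beta> * local_field k n G \<sigma> v)) / 2)))"

definition block_magnetization :: "nat \<Rightarrow> (nat \<Rightarrow> nat) \<Rightarrow> config \<Rightarrow> nat \<Rightarrow> real" where
  "block_magnetization n G \<sigma> i = (\<Sum>v\<in>{v. v < n \<and> G v = i}. real_of_int (\<sigma> v)) / real n"

text \<open>Law of the trajectory (X_0,...,X_T) of the Markov chain with kernel P started at x,
as a distribution on lists of length T+1.\<close>
primrec path_law :: "('a \<Rightarrow> 'a pmf) \<Rightarrow> 'a \<Rightarrow> nat \<Rightarrow> 'a list pmf" where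
  "path_law P x 0 = return_pmf [x]"
| "path_law P x (Suc t) =
     bind_pmf (path_law P x t) (\<lambda>xs. map_pmf (\<lambda>y. xs @ [y]) (P (last xs)))"

text \<open>Integer time horizon floor(c n log n); for c > 0, tau > c n log n iff tau > horizon.\<close>
definition horizon :: "real \<Rightarrow> nat \<Rightarrow> nat" where
  "horizon c n = nat \<lfloor>c * real n * ln (real n)\<rfloor>"

text \<open>Event tau > T: the two trajectories differ at every time 0..T.\<close>
definition not_coalesced :: "nat \<Rightarrow> ('a list \<times> 'a list) set" where
  "not_coalesced T = {(xs, ys). \<forall>t\<le>T. xs ! t \<noteq> ys ! t}"

end

(* Couple the two Glauber dynamics through a block-preserving involution \<pi> of the vertices that
   pairs each vertex where \<sigma> = +1, \<sigma>' = -1 with one of the same block where \<sigma> = -1, \<sigma>' = +1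
   (possible because the block magnetizations agree) and fixes every other vertex: the first
   copy updates a uniform vertex v, the second copy updates \<pi> v, both to the same new spin.
   The local field depends only on the block magnetizations and the spin at the vertex, so both
   marginals are Glauber dynamics and agreement of the block magnetizations is preserved.
   No disagreement is ever created, and a disagreeing v is removed together with \<pi> v with
   probability at least \<delta> = (1 - tanh (\<beta> \<Sum>k\<^sub>i\<^sub>j)) / 2, so the expected number of disagreements
   shrinks by the factor 1 - 2\<delta>/n per step. By Markov's inequality the chains have not met
   after T = n log n / \<delta> steps with probability at most n (1 - 2\<delta>/n)^T \<le> e/n. *)

theory Submission
  imports Defs "HOL-Real_Asymp.Real_Asymp"
begin

section \<open>Paths of Markov chains\<close>

lemma length_path_law: "xs \<in> set_pmf (path_law P x t) \<Longrightarrow> length xs = Suc t"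
  by (induction t arbitrary: xs) auto

lemma map_path_law:
  assumes "\<And>z. map_pmf f (Q z) = P (f z)"
  shows "map_pmf (map f) (path_law Q z t) = path_law P (f z) t"
proof (induction t)
  case 0
  then show ?case by simp
next
  case (Suc t)
  have "map_pmf (map f) (path_law Q z (Suc t)) =
     bind_pmf (path_law Q z t) (\<lambda>zs. map_pmf (\<lambda>a. map f zs @ [a]) (map_pmf f (Q (last zs))))"
    by (simp add: map_bind_pmf pmf.map_comp o_def)
  also have "\<dots> = bind_pmf (path_law Q z t) (\<lambda>zs. map_pmf (\<lambda>a. map f zs @ [a]) (P (last (map f zs))))"
  proof (rule bind_pmf_cong[OF refl])
    fix zs
    assume "zs \<in> set_pmf (path_law Q z t)"
    then have "zs \<noteq> []"
      using length_path_law by fastforce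
    then show "map_pmf (\<lambda>a. map f zs @ [a]) (map_pmf f (Q (last zs))) =
        map_pmf (\<lambda>a. map f zs @ [a]) (P (last (map f zs)))"
      by (simp add: assms last_map)
  qed
  also have "\<dots> = bind_pmf (map_pmf (map f) (path_law Q z t)) (\<lambda>xs. map_pmf (\<lambda>a. xs @ [a]) (P (last xs)))"
    by (simp add: bind_map_pmf)
  also have "\<dots> = path_law P (f z) (Suc t)"
    using Suc by simp
  finally show ?case .
qed

lemma map_last_path_law_Suc:
  "map_pmf last (path_law Q z (Suc t)) = bind_pmf (map_pmf last (path_law Q z t)) Q"
  by (simp add: map_bind_pmf pmf.map_comp o_def bind_map_pmf map_pmf_def[symmetric])

lemma set_map_last_path_law_subset:
  assumes "\<And>z. z \<in> S \<Longrightarrow> set_pmf (Q z) \<subseteq> S" and "z\<^sub>0 \<in> S"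
  shows "set_pmf (map_pmf last (path_law Q z\<^sub>0 t)) \<subseteq> S"
proof (induction t)
  case 0
  then show ?case using assms by simp
next
  case (Suc t)
  then show ?case using assms(1) unfolding map_last_path_law_Suc by fastforce
qed

lemma nn_integral_last_path_law_le:
  fixes D :: "'a \<Rightarrow> ennreal"
  assumes "\<And>z. z \<in> S \<Longrightarrow> set_pmf (Q z) \<subseteq> S" and "z\<^sub>0 \<in> S"
    and "\<And>z. z \<in> S \<Longrightarrow> (\<integral>\<^sup>+y. D y \<partial>Q z) \<le> r * D z"
  shows "(\<integral>\<^sup>+y. D y \<partial>map_pmf last (path_law Q z\<^sub>0 t)) \<le> r ^ t * D z\<^sub>0"
proof (induction t)
  case 0
  then show ?case by simp
next
  case (Suc t)
  let ?L = "map_pmf last (path_law Q z\<^sub>0 t)"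
  have "(\<integral>\<^sup>+y. D y \<partial>map_pmf last (path_law Q z\<^sub>0 (Suc t))) = (\<integral>\<^sup>+z. (\<integral>\<^sup>+y. D y \<partial>Q z) \<partial>?L)"
    by (simp add: map_last_path_law_Suc)
  also have "\<dots> \<le> (\<integral>\<^sup>+z. r * D z \<partial>?L)"
    using set_map_last_path_law_subset[of S Q z\<^sub>0 t] assms
    by (intro nn_integral_mono_AE) (auto simp: AE_measure_pmf_iff simp del: set_map_pmf)
  also have "\<dots> = r * (\<integral>\<^sup>+z. D z \<partial>?L)"
    by (simp add: nn_integral_cmult)
  also have "\<dots> \<le> r * (r ^ t * D z\<^sub>0)"
    using Suc by (simp add: mult_left_mono)
  finally show ?case
    by (simp add: mult.assoc)
qed

lemma emeasure_last_path_law_le: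
  fixes D :: "'a \<Rightarrow> ennreal"
  assumes "\<And>z. z \<in> S \<Longrightarrow> set_pmf (Q z) \<subseteq> S" and "z\<^sub>0 \<in> S"
    and "\<And>z. z \<in> S \<Longrightarrow> (\<integral>\<^sup>+y. D y \<partial>Q z) \<le> r * D z"
    and "\<And>z. z \<in> S \<Longrightarrow> z \<in> B \<Longrightarrow> 1 \<le> D z"
  shows "emeasure (map_pmf last (path_law Q z\<^sub>0 t)) B \<le> r ^ t * D z\<^sub>0"
proof -
  let ?L = "map_pmf last (path_law Q z\<^sub>0 t)"
  have "emeasure ?L B = (\<integral>\<^sup>+z. indicator B z \<partial>?L)"
    by (rule nn_integral_indicator[symmetric]) simp
  also have "\<dots> \<le> (\<integral>\<^sup>+z. D z \<partial>?L)"
    using set_map_last_path_law_subset[of S Q z\<^sub>0 t] assms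
    by (intro nn_integral_mono_AE) (auto simp: AE_measure_pmf_iff indicator_def simp del: set_map_pmf)
  also have "\<dots> \<le> r ^ t * D z\<^sub>0"
    by (rule nn_integral_last_path_law_le[OF assms(1-3)])
  finally show ?thesis .
qed

definition coupled_path_law :: "('a \<times> 'a \<Rightarrow> ('a \<times> 'a) pmf) \<Rightarrow> 'a \<times> 'a \<Rightarrow> nat \<Rightarrow> ('a list \<times> 'a list) pmf" where
  "coupled_path_law Q z T = map_pmf (\<lambda>zs. (map fst zs, map snd zs)) (path_law Q z T)"

lemma map_fst_coupled_path_law:
  assumes "\<And>z. map_pmf fst (Q z) = P (fst z)"
  shows "map_pmf fst (coupled_path_law Q z T) = path_law P (fst z) T"
  using map_path_law[of fst Q P, OF assms] by (simp add: coupled_path_law_def pmf.map_comp o_def)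

lemma map_snd_coupled_path_law:
  assumes "\<And>z. map_pmf snd (Q z) = P (snd z)"
  shows "map_pmf snd (coupled_path_law Q z T) = path_law P (snd z) T"
  using map_path_law[of snd Q P, OF assms] by (simp add: coupled_path_law_def pmf.map_comp o_def)

lemma prob_not_coalesced_le_prob_last:
  "measure_pmf.prob (coupled_path_law Q z T) (not_coalesced T)
     \<le> measure_pmf.prob (map_pmf last (path_law Q z T)) {z. fst z \<noteq> snd z}"
proof -
  let ?M = "path_law Q z T"
  have "(\<lambda>zs. (map fst zs, map snd zs)) -` not_coalesced T \<inter> set_pmf ?M \<subseteq> last -` {z. fst z \<noteq> snd z}"
  proof
    fix zs
    assume zs: "zs \<in> (\<lambda>zs. (map fst zs, map snd zs)) -` not_coalesced T \<inter> set_pmf ?M"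
    then have "length zs = Suc T"
      by (intro length_path_law) blast
    moreover from zs have "map fst zs ! T \<noteq> map snd zs ! T"
      by (auto simp: not_coalesced_def)
    ultimately show "zs \<in> last -` {z. fst z \<noteq> snd z}"
      by (cases "zs = []") (auto simp: last_conv_nth)
  qed
  then have "measure_pmf.prob ?M ((\<lambda>zs. (map fst zs, map snd zs)) -` not_coalesced T \<inter> set_pmf ?M)
      \<le> measure_pmf.prob ?M (last -` {z. fst z \<noteq> snd z})"
    by (intro measure_pmf.finite_measure_mono) simp_all
  then show ?thesis
    by (simp add: coupled_path_law_def measure_Int_set_pmf)
qed

section \<open>Block sums and the local field\<close>

definition block_sum :: "nat \<Rightarrow> (nat \<Rightarrow> nat) \<Rightarrow> config \<Rightarrow> nat \<Rightarrow> int" where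
  "block_sum n G \<sigma> i = (\<Sum>v | v < n \<and> G v = i. \<sigma> v)"

lemma block_magnetization_eq: "block_magnetization n G \<sigma> i = real_of_int (block_sum n G \<sigma> i) / real n"
  by (simp add: block_magnetization_def block_sum_def)

lemma config_space_pm1: "\<sigma> \<in> config_space n \<Longrightarrow> v < n \<Longrightarrow> \<sigma> v = 1 \<or> \<sigma> v = -1"
  by (auto simp: config_space_def)

lemma local_field_eq_block_sums:
  assumes "v < n"
  shows "local_field k n G \<sigma> v =
    (\<Sum>i\<in>G ` {0..<n}. k (G v) i / real n * block_sum n G \<sigma> i) - k (G v) (G v) / real n * \<sigma> v"
proof -
  have "(\<Sum>w\<in>{0..<n}. k (G v) (G w) / real n * \<sigma> w) =
      (\<Sum>i\<in>G ` {0..<n}. \<Sum>w | w \<in> {0..<n} \<and> G w = i. k (G v) (G w) / real n * \<sigma> w)"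
    by (rule sum.group[symmetric]) auto
  also have "\<dots> = (\<Sum>i\<in>G ` {0..<n}. k (G v) i / real n * block_sum n G \<sigma> i)"
    by (intro sum.cong refl) (auto simp: block_sum_def sum_distrib_left intro!: sum.cong)
  finally show ?thesis
    using assms by (simp add: local_field_def interaction_def sum_diff1)
qed

lemma local_field_cong:
  assumes "block_sum n G \<sigma> = block_sum n G \<sigma>'" "v < n" "w < n" "G w = G v" "\<sigma>' w = \<sigma> v"
  shows "local_field k n G \<sigma> v = local_field k n G \<sigma>' w"
  unfolding local_field_eq_block_sums[OF assms(2)] local_field_eq_block_sums[OF assms(3)]
  using assms(1,4,5) by simp

lemma abs_local_field_le:
  assumes "\<forall>v<n. G v < m" "\<forall>i<m. \<forall>j<m. 0 \<le> k i j" "\<sigma> \<in> config_space n" "v < n"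
  shows "\<bar>local_field k n G \<sigma> v\<bar> \<le> (\<Sum>i<m. \<Sum>j<m. k i j)"
proof -
  let ?K = "\<Sum>i<m. \<Sum>j<m. k i j"
  have k_le_K: "k i j \<le> ?K" if "i < m" "j < m" for i j
  proof -
    have "k i j \<le> (\<Sum>j<m. k i j)"
      using that assms(2) by (intro member_le_sum) auto
    also have "\<dots> \<le> ?K"
      using that assms(2) by (intro member_le_sum[where f="\<lambda>i. \<Sum>j<m. k i j"] sum_nonneg) auto
    finally show ?thesis .
  qed
  have "\<bar>local_field k n G \<sigma> v\<bar> \<le> (\<Sum>w\<in>{0..<n} - {v}. \<bar>interaction k n G v w * \<sigma> w\<bar>)"
    unfolding local_field_def by (rule sum_abs)
  also have "\<dots> \<le> (\<Sum>w\<in>{0..<n} - {v}. ?K / real n)"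
  proof (rule sum_mono)
    fix w
    assume w: "w \<in> {0..<n} - {v}"
    then have "\<bar>real_of_int (\<sigma> w)\<bar> = 1"
      using config_space_pm1[OF assms(3), of w] by auto
    moreover have "0 \<le> k (G v) (G w)" "k (G v) (G w) \<le> ?K"
      using assms w by (auto intro: k_le_K)
    ultimately show "\<bar>interaction k n G v w * \<sigma> w\<bar> \<le> ?K / real n"
      by (simp add: interaction_def abs_mult divide_right_mono)
  qed
  also have "\<dots> \<le> (\<Sum>w\<in>{0..<n}. ?K / real n)"
    using assms(2) by (intro sum_mono2) (auto intro!: divide_nonneg_nonneg sum_nonneg)
  also have "\<dots> = ?K"
    using assms(4) by simp
  finally show ?thesis .
qed

lemma glauber_prob_bounds:
  fixes \<beta> h K :: real
  assumes "\<bar>h\<bar> \<le> K" "0 \<le> \<beta>"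
  shows "(1 - tanh (\<beta> * K)) / 2 \<le> (1 + tanh (\<beta> * h)) / 2"
    and "(1 - tanh (\<beta> * K)) / 2 \<le> 1 - (1 + tanh (\<beta> * h)) / 2"
proof -
  have "- h \<le> K" "h \<le> K"
    using assms(1) by linarith+
  then have "\<beta> * (- h) \<le> \<beta> * K" "\<beta> * h \<le> \<beta> * K"
    using assms(2) by (simp_all only: mult_left_mono)
  then have "tanh (\<beta> * (- h)) \<le> tanh (\<beta> * K)" "tanh (\<beta> * h) \<le> tanh (\<beta> * K)"
    by (simp_all only: tanh_real_le_iff)
  then have "- tanh (\<beta> * h) \<le> tanh (\<beta> * K)" "tanh (\<beta> * h) \<le> tanh (\<beta> * K)"
    by (simp_all only: mult_minus_right tanh_minus)
  then show "(1 - tanh (\<beta> * K)) / 2 \<le> (1 + tanh (\<beta> * h)) / 2"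
    and "(1 - tanh (\<beta> * K)) / 2 \<le> 1 - (1 + tanh (\<beta> * h)) / 2"
    by (simp_all add: field_simps)
qed

definition min_spin_prob :: "real \<Rightarrow> (nat \<Rightarrow> nat \<Rightarrow> real) \<Rightarrow> nat \<Rightarrow> real" where
  "min_spin_prob \<beta> k m = (1 - tanh (\<beta> * (\<Sum>i<m. \<Sum>j<m. k i j))) / 2"

lemma min_spin_prob_bounds:
  assumes "\<forall>i<m. \<forall>j<m. 0 \<le> k i j" "0 \<le> \<beta>"
  shows "0 < min_spin_prob \<beta> k m" "min_spin_prob \<beta> k m \<le> 1 / 2"
proof -
  have "0 \<le> \<beta> * (\<Sum>i<m. \<Sum>j<m. k i j)"
    using assms by (intro mult_nonneg_nonneg sum_nonneg) auto
  then have "0 \<le> tanh (\<beta> * (\<Sum>i<m. \<Sum>j<m. k i j))"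
    by simp
  then show "0 < min_spin_prob \<beta> k m" "min_spin_prob \<beta> k m \<le> 1 / 2"
    using tanh_real_lt_1[of "\<beta> * (\<Sum>i<m. \<Sum>j<m. k i j)"] by (simp_all add: min_spin_prob_def)
qed

lemma min_spin_prob_le:
  assumes "\<forall>v<n. G v < m" "\<forall>i<m. \<forall>j<m. 0 \<le> k i j" "\<sigma> \<in> config_space n" "v < n" "0 \<le> \<beta>"
  defines "q \<equiv> (1 + tanh (\<beta> * local_field k n G \<sigma> v)) / 2"
  shows "min_spin_prob \<beta> k m \<le> q" "min_spin_prob \<beta> k m \<le> 1 - q"
  unfolding q_def min_spin_prob_def
  by (rule glauber_prob_bounds[OF abs_local_field_le[OF assms(1-4)] assms(5)])+

lemma block_sum_fun_upd:
  assumes "v < n"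
  shows "block_sum n G (\<sigma>(v := s)) i = block_sum n G \<sigma> i + (if G v = i then s - \<sigma> v else 0)"
proof -
  have "\<sigma>(v := s) = (\<lambda>w. \<sigma> w + (if w = v then s - \<sigma> v else 0))"
    by auto
  then show ?thesis
    using assms by (simp add: block_sum_def sum.distrib sum.delta)
qed

lemma card_up_eq_card_down:
  assumes "x \<in> config_space n" "y \<in> config_space n" "block_sum n G x i = block_sum n G y i"
  shows "card {v. v < n \<and> G v = i \<and> x v = 1 \<and> y v = -1} = card {v. v < n \<and> G v = i \<and> x v = -1 \<and> y v = 1}"
proof -
  let ?B = "{v. v < n \<and> G v = i}"
  have "0 = (\<Sum>v\<in>?B. x v - y v)"
    using assms(3) by (simp add: block_sum_def sum_subtractf)
  also have "\<dots> = (\<Sum>v\<in>?B. 2 * of_bool (x v = 1 \<and> y v = -1) - 2 * of_bool (x v = -1 \<and> y v = 1))"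
    using config_space_pm1[OF assms(1)] config_space_pm1[OF assms(2)] by (intro sum.cong) fastforce+
  also have "\<dots> = 2 * int (card {v. v < n \<and> G v = i \<and> x v = 1 \<and> y v = -1})
      - 2 * int (card {v. v < n \<and> G v = i \<and> x v = -1 \<and> y v = 1})"
    by (simp add: sum_subtractf sum_distrib_left[symmetric] sum.inter_filter[symmetric]
        Collect_conj_eq[symmetric] conj_assoc)
  finally show ?thesis
    by simp
qed

section \<open>The matching coupling\<close>

definition matching :: "nat \<Rightarrow> (nat \<Rightarrow> nat) \<Rightarrow> config \<Rightarrow> config \<Rightarrow> (nat \<Rightarrow> nat) \<Rightarrow> bool" where
  "matching n G x y \<pi> \<longleftrightarrow>
     (\<forall>v<n. \<pi> v < n \<and> \<pi> (\<pi> v) = v \<and> G (\<pi> v) = G v \<and> y (\<pi> v) = x v \<and> (x v = y v \<longrightarrow> \<pi> v = v))"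

lemma matching_swap: "matching n G x y \<pi> \<Longrightarrow> v < n \<Longrightarrow> x (\<pi> v) = y v"
  unfolding matching_def by metis

lemma block_preserving_swap_exists:
  assumes "finite U" "finite D" "U \<inter> D = {}" "\<And>i. card {u \<in> U. G u = i} = card {d \<in> D. G d = i}"
  shows "\<exists>\<pi>. \<forall>v. \<pi> (\<pi> v) = v \<and> G (\<pi> v) = G v \<and>
    (v \<in> U \<longrightarrow> \<pi> v \<in> D) \<and> (v \<in> D \<longrightarrow> \<pi> v \<in> U) \<and> (v \<notin> U \<union> D \<longrightarrow> \<pi> v = v)"
proof -
  define U' where "U' i = {u \<in> U. G u = i}" for i
  define D' where "D' i = {d \<in> D. G d = i}" for i
  have "\<exists>h. bij_betw h (U' i) (D' i)" for i
    using assms by (intro finite_same_card_bij) (auto simp: U'_def D'_def)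
  then obtain h where h: "\<And>i. bij_betw (h i) (U' i) (D' i)"
    by metis
  define \<pi> where "\<pi> v = (if v \<in> U then h (G v) v
      else if v \<in> D then the_inv_into (U' (G v)) (h (G v)) v else v)" for v
  have "\<pi> (\<pi> v) = v \<and> G (\<pi> v) = G v \<and>
      (v \<in> U \<longrightarrow> \<pi> v \<in> D) \<and> (v \<in> D \<longrightarrow> \<pi> v \<in> U) \<and> (v \<notin> U \<union> D \<longrightarrow> \<pi> v = v)" for v
  proof (cases "v \<in> U")
    case True
    then have v: "v \<in> U' (G v)"
      by (simp add: U'_def)
    then have "h (G v) v \<in> D' (G v)"
      using h bij_betwE by blast
    moreover have "the_inv_into (U' (G v)) (h (G v)) (h (G v) v) = v"
      using v h by (simp add: bij_betw_def the_inv_into_f_f)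
    ultimately show ?thesis
      using True assms(3) by (auto simp: \<pi>_def D'_def)
  next
    case False
    show ?thesis
    proof (cases "v \<in> D")
      case True
      then have v: "v \<in> D' (G v)"
        by (simp add: D'_def)
      then have "the_inv_into (U' (G v)) (h (G v)) v \<in> U' (G v)"
        using bij_betw_the_inv_into[OF h] bij_betwE by blast
      moreover have "h (G v) (the_inv_into (U' (G v)) (h (G v)) v) = v"
        using v by (intro f_the_inv_into_f_bij_betw[OF h])
      ultimately show ?thesis
        using False True by (auto simp: \<pi>_def U'_def)
    next
      case False
      then show ?thesis
        using \<open>v \<notin> U\<close> by (simp add: \<pi>_def)
    qed
  qed
  then show ?thesis
    by blast
qed

lemma matching_exists:
  assumes "x \<in> config_space n" "y \<in> config_space n" "block_sum n G x = block_sum n G y"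
  shows "\<exists>\<pi>. matching n G x y \<pi>"
proof -
  let ?U = "{v. v < n \<and> x v = 1 \<and> y v = -1}"
  let ?D = "{v. v < n \<and> x v = -1 \<and> y v = 1}"
  have "card {u \<in> ?U. G u = i} = card {d \<in> ?D. G d = i}" for i
  proof -
    have "{u \<in> ?U. G u = i} = {v. v < n \<and> G v = i \<and> x v = 1 \<and> y v = -1}"
      "{d \<in> ?D. G d = i} = {v. v < n \<and> G v = i \<and> x v = -1 \<and> y v = 1}"
      by auto
    then show ?thesis
      using card_up_eq_card_down[OF assms(1,2)] assms(3) by simp
  qed
  moreover have "?U \<inter> ?D = {}"
    by auto
  ultimately obtain \<pi> where \<pi>: "\<forall>v. \<pi> (\<pi> v) = v \<and> G (\<pi> v) = G v \<and>
      (v \<in> ?U \<longrightarrow> \<pi> v \<in> ?D) \<and> (v \<in> ?D \<longrightarrow> \<pi> v \<in> ?U) \<and> (v \<notin> ?U \<union> ?D \<longrightarrow> \<pi> v = v)"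
    using block_preserving_swap_exists[of ?U ?D G] by auto
  have "\<pi> v < n \<and> \<pi> (\<pi> v) = v \<and> G (\<pi> v) = G v \<and> y (\<pi> v) = x v \<and> (x v = y v \<longrightarrow> \<pi> v = v)"
    if v: "v < n" for v
  proof -
    consider "v \<in> ?U" | "v \<in> ?D" | "x v = y v"
      using v config_space_pm1[OF assms(1) v] config_space_pm1[OF assms(2) v] by fastforce
    then show ?thesis
      using \<pi>[rule_format, of v] v by cases auto
  qed
  then show ?thesis
    unfolding matching_def by blast
qed

fun balanced :: "nat \<Rightarrow> (nat \<Rightarrow> nat) \<Rightarrow> config \<times> config \<Rightarrow> bool" where
  "balanced n G (x, y) \<longleftrightarrow>
     0 < n \<and> x \<in> config_space n \<and> y \<in> config_space n \<and> block_sum n G x = block_sum n G y"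

text \<open>Off balanced pairs, which the coupled chain never visits, the two copies move independently.\<close>
fun glauber_coupling ::
  "real \<Rightarrow> (nat \<Rightarrow> nat \<Rightarrow> real) \<Rightarrow> nat \<Rightarrow> (nat \<Rightarrow> nat) \<Rightarrow> config \<times> config \<Rightarrow> (config \<times> config) pmf"
where
  "glauber_coupling \<beta> k n G (x, y) =
    (if balanced n G (x, y) then
       bind_pmf (pmf_of_set {0..<n}) (\<lambda>v.
         map_pmf (\<lambda>b. (x(v := if b then 1 else -1), y((SOME \<pi>. matching n G x y \<pi>) v := if b then 1 else -1)))
           (bernoulli_pmf ((1 + tanh (\<beta> * local_field k n G x v)) / 2)))
     else pair_pmf (glauber_step \<beta> k n G x) (glauber_step \<beta> k n G y))"

lemma matching_some:
  assumes "balanced n G (x, y)"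
  shows "matching n G x y (SOME \<pi>. matching n G x y \<pi>)"
proof -
  have "\<exists>\<pi>. matching n G x y \<pi>"
    using assms by (intro matching_exists) auto
  then show ?thesis
    by (rule someI_ex)
qed

lemma map_pmf_matching_pmf_of_set:
  assumes "matching n G x y \<pi>" "0 < n"
  shows "map_pmf \<pi> (pmf_of_set {0..<n}) = pmf_of_set {0..<n}"
proof -
  have "inj_on \<pi> {0..<n}"
    using assms(1) by (intro inj_on_inverseI[where g = \<pi>]) (auto simp: matching_def)
  moreover have "\<pi> ` {0..<n} = {0..<n}"
    using assms(1) unfolding matching_def by (auto intro!: image_eqI[where x = "\<pi> _"])
  ultimately show ?thesis
    using assms(2) by (simp add: map_pmf_of_set_inj)
qed

lemma map_fst_glauber_coupling: "map_pmf fst (glauber_coupling \<beta> k n G z) = glauber_step \<beta> k n G (fst z)"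
  by (cases z) (auto simp: map_fst_pair_pmf map_bind_pmf pmf.map_comp o_def glauber_step_def)

lemma map_snd_glauber_coupling: "map_pmf snd (glauber_coupling \<beta> k n G z) = glauber_step \<beta> k n G (snd z)"
proof (cases z)
  case (Pair x y)
  show ?thesis
  proof (cases "balanced n G (x, y)")
    case False
    then show ?thesis
      by (simp add: Pair map_snd_pair_pmf del: balanced.simps)
  next
    case True
    define \<pi> where "\<pi> = (SOME \<pi>. matching n G x y \<pi>)"
    have \<pi>: "matching n G x y \<pi>"
      unfolding \<pi>_def using True by (rule matching_some)
    define F where "F = (\<lambda>w. map_pmf (\<lambda>b. y(w := if b then 1 else -1))
        (bernoulli_pmf ((1 + tanh (\<beta> * local_field k n G y w)) / 2)))"
    have "map_pmf snd (glauber_coupling \<beta> k n G z) = bind_pmf (pmf_of_set {0..<n}) (\<lambda>v. F (\<pi> v))"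
    proof -
      have "local_field k n G x v = local_field k n G y (\<pi> v)" if "v < n" for v
        using True \<pi> that by (intro local_field_cong) (auto simp: matching_def)
      then show ?thesis
        using True by (auto simp: Pair F_def \<pi>_def[symmetric] map_bind_pmf pmf.map_comp o_def
            intro!: bind_pmf_cong)
    qed
    also have "\<dots> = bind_pmf (map_pmf \<pi> (pmf_of_set {0..<n})) F"
      by (simp add: bind_map_pmf)
    also have "\<dots> = glauber_step \<beta> k n G (snd z)"
      using True \<pi> by (simp add: map_pmf_matching_pmf_of_set Pair F_def glauber_step_def)
    finally show ?thesis .
  qed
qed

lemma set_glauber_coupling_balanced:
  assumes "balanced n G z" "z' \<in> set_pmf (glauber_coupling \<beta> k n G z)"
  shows "balanced n G z'"
proof -
  obtain x y where z: "z = (x, y)"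
    by (cases z)
  define \<pi> where "\<pi> = (SOME \<pi>. matching n G x y \<pi>)"
  have \<pi>: "matching n G x y \<pi>"
    unfolding \<pi>_def using assms(1) z by (simp add: matching_some)
  obtain v b where v: "v < n" and z': "z' = (x(v := if b then 1 else -1), y(\<pi> v := if b then 1 else -1))"
    using assms by (auto simp: z \<pi>_def[symmetric])
  have "\<pi> v < n" "G (\<pi> v) = G v" "y (\<pi> v) = x v"
    using \<pi> v by (auto simp: matching_def)
  then show ?thesis
    using assms(1) v by (auto simp: z z' block_sum_fun_upd config_space_def)
qed

section \<open>Contraction of the number of disagreements\<close>

fun disagreements :: "nat \<Rightarrow> config \<times> config \<Rightarrow> nat" where
  "disagreements n (x, y) = card {u. u < n \<and> x u \<noteq> y u}"

lemma disagreements_le: "disagreements n z \<le> n"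
proof (cases z)
  case (Pair x y)
  have "card {u. u < n \<and> x u \<noteq> y u} \<le> card {..<n}"
    by (intro card_mono) auto
  then show ?thesis
    by (simp add: Pair)
qed

lemma disagreements_pos:
  assumes "x \<in> config_space n" "y \<in> config_space n" "x \<noteq> y"
  shows "0 < disagreements n (x, y)"
proof -
  obtain u where "x u \<noteq> y u"
    using assms(3) by auto
  moreover have "u < n"
    using assms(1,2) calculation by (cases "u < n") (auto simp: config_space_def)
  ultimately show ?thesis
    by (auto simp: card_gt_0_iff)
qed

lemma disagreements_coupled_update:
  assumes \<pi>: "matching n G x y \<pi>" and "x \<in> config_space n" "y \<in> config_space n" "v < n"
    and s: "s = 1 \<or> s = -1"
  shows "real (disagreements n (x(v := s), y(\<pi> v := s))) =
    real (disagreements n (x, y)) - (if x v \<noteq> y v \<and> s = y v then 2 else 0)"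
proof -
  let ?A = "{u. u < n \<and> x u \<noteq> y u}"
  have \<pi>v: "\<pi> v < n" "y (\<pi> v) = x v" "x (\<pi> v) = y v" "x v = y v \<longrightarrow> \<pi> v = v"
    using \<pi> \<open>v < n\<close> matching_swap[OF \<pi>] by (auto simp: matching_def)
  consider "x v = y v" | "x v \<noteq> y v" "s = y v" | "x v \<noteq> y v" "s = x v"
    using s config_space_pm1[OF assms(2,4)] config_space_pm1[OF assms(3,4)] by fastforce
  then show ?thesis
  proof cases
    case 1
    then have "{u. u < n \<and> (x(v := s)) u \<noteq> (y(\<pi> v := s)) u} = ?A"
      using \<pi>v by auto
    then show ?thesis
      using 1 by simp
  next
    case 2
    have "\<pi> v \<noteq> v"
      using 2 \<pi>v by metis
    then have sub: "{v, \<pi> v} \<subseteq> ?A" and two: "card {v, \<pi> v} = 2"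
      using 2 \<pi>v \<open>v < n\<close> by auto
    have "{u. u < n \<and> (x(v := s)) u \<noteq> (y(\<pi> v := s)) u} = ?A - {v, \<pi> v}"
      using 2 \<pi>v by auto
    moreover have "2 \<le> card ?A"
      using card_mono[OF _ sub] two by simp
    ultimately show ?thesis
      using 2 sub two by (simp add: card_Diff_subset of_nat_diff)
  next
    case 3
    then have "x(v := s) = x" "y(\<pi> v := s) = y"
      using \<pi>v by auto
    then show ?thesis
      using 3 by simp
  qed
qed

lemma nn_integral_disagreements_coupled_update:
  assumes "matching n G x y \<pi>" "x \<in> config_space n" "y \<in> config_space n" "v < n"
    and q: "0 \<le> \<delta>" "\<delta> \<le> q" "\<delta> \<le> 1 - q"
  shows "(\<integral>\<^sup>+b. ennreal (disagreements n (x(v := if b then 1 else -1), y(\<pi> v := if b then 1 else -1)))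
      \<partial>bernoulli_pmf q) \<le> ennreal (real (disagreements n (x, y)) - 2 * \<delta> * of_bool (x v \<noteq> y v))"
proof -
  define g where "g b = real (disagreements n (x(v := if b then 1 else -1), y(\<pi> v := if b then 1 else -1)))"
    for b
  let ?C = "real (disagreements n (x, y))"
  have g: "g b = ?C - (if x v \<noteq> y v \<and> (if b then 1 else -1) = y v then 2 else 0)" for b
    unfolding g_def by (rule disagreements_coupled_update[OF assms(1-4)]) simp
  have "0 \<le> q" and "q \<le> 1"
    using q by linarith+
  moreover have "0 \<le> g b" for b
    by (simp add: g_def)
  ultimately have "(\<integral>\<^sup>+b. ennreal (g b) \<partial>bernoulli_pmf q) = ennreal (g True * q + g False * (1 - q))"
    by (simp add: ennreal_mult'' ennreal_plus)
  also have "\<dots> \<le> ennreal (?C - 2 * \<delta> * of_bool (x v \<noteq> y v))"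
    using q config_space_pm1[OF assms(3,4)]
    by (intro ennreal_leI) (cases "x v = y v"; auto simp: g algebra_simps)
  finally show ?thesis
    by (simp only: g_def)
qed

lemma sum_ennreal_card_minus_indicator:
  assumes "A \<subseteq> {0..<n}" "0 < n" "0 \<le> \<delta>" "\<delta> \<le> 1 / 2"
  shows "(\<Sum>v\<in>{0..<n}. ennreal (real (card A) - 2 * \<delta> * of_bool (v \<in> A))) / of_nat n =
    ennreal (1 - 2 * \<delta> / n) * ennreal (card A)"
proof -
  let ?a = "\<lambda>v. real (card A) - 2 * \<delta> * of_bool (v \<in> A)"
  have a_nonneg: "0 \<le> ?a v" for v
  proof (cases "v \<in> A")
    case True
    then have "1 \<le> card A"
      using assms(1) finite_subset[OF assms(1)] by (metis One_nat_def Suc_leI card_gt_0_iff empty_iff finite_atLeastLessThan)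
    then show ?thesis
      using True assms(4) by simp
  qed simp
  have "(\<Sum>v\<in>{0..<n}. ennreal (?a v)) / of_nat n = ennreal ((\<Sum>v\<in>{0..<n}. ?a v) / n)"
    using a_nonneg assms(2) by (simp add: sum_ennreal ennreal_of_nat_eq_real_of_nat divide_ennreal sum_nonneg)
  also have "(\<Sum>v\<in>{0..<n}. ?a v) = real n * card A - 2 * \<delta> * card ({0..<n} \<inter> A)"
    by (simp add: sum_subtractf sum_distrib_left[symmetric] sum.inter_filter[symmetric] Int_def)
  also have "\<dots> / n = (1 - 2 * \<delta> / n) * card A"
    using assms(1,2) by (simp add: Int_absorb1 field_simps)
  also have "\<dots> = ennreal (1 - 2 * \<delta> / n) * ennreal (card A)"
    using assms(2,4) by (intro ennreal_mult) (auto simp: field_simps)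
  finally show ?thesis .
qed

lemma nn_integral_disagreements_glauber_coupling:
  assumes z: "balanced n G z" and "\<forall>v<n. G v < m" "\<forall>i<m. \<forall>j<m. 0 \<le> k i j" "0 \<le> \<beta>"
  defines "\<delta> \<equiv> min_spin_prob \<beta> k m"
  shows "(\<integral>\<^sup>+z'. ennreal (disagreements n z') \<partial>glauber_coupling \<beta> k n G z)
    \<le> ennreal (1 - 2 * \<delta> / n) * ennreal (disagreements n z)"
proof -
  obtain x y where xy: "z = (x, y)"
    by (cases z)
  define \<pi> where "\<pi> = (SOME \<pi>. matching n G x y \<pi>)"
  have \<pi>: "matching n G x y \<pi>"
    unfolding \<pi>_def using z xy by (simp add: matching_some)
  have n: "0 < n" and x: "x \<in> config_space n" and y: "y \<in> config_space n"
    using z xy by auto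
  have \<delta>: "0 < \<delta>" "\<delta> \<le> 1 / 2"
    unfolding \<delta>_def using min_spin_prob_bounds assms(3,4) by auto
  let ?A = "{u. u < n \<and> x u \<noteq> y u}"
  have "(\<integral>\<^sup>+z'. ennreal (disagreements n z') \<partial>glauber_coupling \<beta> k n G z) =
      (\<Sum>v\<in>{0..<n}. \<integral>\<^sup>+b. ennreal (disagreements n (x(v := if b then 1 else -1), y(\<pi> v := if b then 1 else -1)))
        \<partial>bernoulli_pmf ((1 + tanh (\<beta> * local_field k n G x v)) / 2)) / of_nat n"
    using z n by (simp add: xy \<pi>_def[symmetric] nn_integral_pmf_of_set del: balanced.simps disagreements.simps)
  also have "\<dots> \<le> (\<Sum>v\<in>{0..<n}. ennreal (real (card ?A) - 2 * \<delta> * of_bool (v \<in> ?A))) / of_nat n"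
  proof (intro divide_right_mono_ennreal sum_mono)
    fix v
    assume "v \<in> {0..<n}"
    then have v: "v < n"
      by simp
    have "(\<integral>\<^sup>+b. ennreal (disagreements n (x(v := if b then 1 else -1), y(\<pi> v := if b then 1 else -1)))
        \<partial>bernoulli_pmf ((1 + tanh (\<beta> * local_field k n G x v)) / 2))
        \<le> ennreal (real (disagreements n (x, y)) - 2 * \<delta> * of_bool (x v \<noteq> y v))"
      using \<delta> min_spin_prob_le[OF assms(2,3) x v assms(4)] unfolding \<delta>_def
      by (intro nn_integral_disagreements_coupled_update[OF \<pi> x y v]) auto
    moreover have "real (disagreements n (x, y)) - 2 * \<delta> * of_bool (x v \<noteq> y v) =
        real (card ?A) - 2 * \<delta> * of_bool (v \<in> ?A)"
      using v by simp
    ultimately show "(\<integral>\<^sup>+b. ennreal (disagreements n (x(v := if b then 1 else -1), y(\<pi> v := if b then 1 else -1)))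
        \<partial>bernoulli_pmf ((1 + tanh (\<beta> * local_field k n G x v)) / 2))
        \<le> ennreal (real (card ?A) - 2 * \<delta> * of_bool (v \<in> ?A))"
      by (simp only:)
  qed
  also have "\<dots> = ennreal (1 - 2 * \<delta> / n) * ennreal (card ?A)"
    using n \<delta> by (intro sum_ennreal_card_minus_indicator) auto
  finally show ?thesis
    by (simp add: xy)
qed

lemma prob_not_coalesced_glauber_coupling_le:
  assumes "balanced n G z" "\<forall>v<n. G v < m" "\<forall>i<m. \<forall>j<m. 0 \<le> k i j" "0 \<le> \<beta>"
  defines "\<delta> \<equiv> min_spin_prob \<beta> k m"
  shows "measure_pmf.prob (coupled_path_law (glauber_coupling \<beta> k n G) z T) (not_coalesced T)
    \<le> (1 - 2 * \<delta> / n) ^ T * n"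
proof -
  let ?L = "map_pmf last (path_law (glauber_coupling \<beta> k n G) z T)"
  let ?r = "1 - 2 * \<delta> / n"
  have "0 < \<delta>" "\<delta> \<le> 1 / 2" "0 < n"
    using min_spin_prob_bounds assms(1,3,4) by (auto simp: \<delta>_def elim: balanced.elims)
  then have r: "0 \<le> ?r"
    by (simp add: field_simps)
  have "emeasure ?L {z. fst z \<noteq> snd z} \<le> ennreal ?r ^ T * ennreal (disagreements n z)"
  proof (rule emeasure_last_path_law_le[where S = "{z. balanced n G z}"])
    show "\<And>z. z \<in> {z. balanced n G z} \<Longrightarrow> set_pmf (glauber_coupling \<beta> k n G z) \<subseteq> {z. balanced n G z}"
      using set_glauber_coupling_balanced by blast
    show "\<And>z. z \<in> {z. balanced n G z} \<Longrightarrow> (\<integral>\<^sup>+z'. ennreal (disagreements n z') \<partial>glauber_coupling \<beta> k n G z)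
        \<le> ennreal ?r * ennreal (disagreements n z)"
      using nn_integral_disagreements_glauber_coupling assms(2-4) unfolding \<delta>_def by blast
    show "\<And>z. z \<in> {z. balanced n G z} \<Longrightarrow> z \<in> {z. fst z \<noteq> snd z} \<Longrightarrow> 1 \<le> ennreal (disagreements n z)"
      using disagreements_pos by (force elim: balanced.elims)
  qed (use assms(1) in simp)
  also have "\<dots> \<le> ennreal ?r ^ T * ennreal n"
    using disagreements_le by (intro mult_left_mono ennreal_leI) auto
  also have "\<dots> = ennreal (?r ^ T * n)"
    using r by (simp add: ennreal_power ennreal_mult)
  finally have "measure_pmf.prob ?L {z. fst z \<noteq> snd z} \<le> ?r ^ T * n"
    using r by (simp add: measure_pmf.emeasure_eq_measure ennreal_le_iff del: measure_map_pmf)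
  then show ?thesis
    using prob_not_coalesced_le_prob_last[of "glauber_coupling \<beta> k n G" z T] by simp
qed

lemma contraction_at_horizon_le:
  assumes "0 < \<delta>" "\<delta> \<le> 1 / 2" "1 \<le> n"
  shows "(1 - 2 * \<delta> / n) ^ horizon (1 / \<delta>) n * n \<le> exp 1 / n"
proof -
  let ?T = "horizon (1 / \<delta>) n"
  let ?a = "2 * \<delta> / n"
  have a: "0 \<le> ?a" "?a \<le> 1"
    using assms by (auto simp: field_simps)
  have "0 \<le> 1 / \<delta> * n * ln n"
    using assms by simp
  then have T: "1 / \<delta> * n * ln n - 1 \<le> ?T"
    unfolding horizon_def by linarith
  have "(1 - ?a) ^ ?T \<le> exp (- ?a) ^ ?T"
    using a exp_ge_add_one_self[of "- ?a"] by (intro power_mono) auto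
  also have "\<dots> = exp (- (?a * ?T))"
    by (simp add: exp_of_nat_mult[symmetric] mult.commute)
  also have "\<dots> \<le> exp (1 - 2 * ln n)"
  proof -
    have "?a * (1 / \<delta> * n * ln n - 1) \<le> ?a * ?T"
      using T a by (intro mult_left_mono) auto
    moreover have "?a * (1 / \<delta> * n * ln n - 1) = 2 * ln n - ?a"
      using assms by (simp add: field_simps)
    ultimately show ?thesis
      using a by simp
  qed
  also have "\<dots> = exp 1 / n\<^sup>2"
  proof -
    have "ln (n\<^sup>2) = 2 * ln n"
      using assms by (simp add: ln_realpow)
    then have "exp (2 * ln n) = n\<^sup>2"
      using assms by (metis exp_ln of_nat_0_less_iff zero_less_power less_le_trans zero_less_one)
    then show ?thesis
      by (simp add: exp_diff)
  qed
  finally show ?thesis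
    using assms by (simp add: power2_eq_square divide_simps mult_right_mono)
qed

lemma balanced_if_block_magnetization_eq:
  assumes "admissible m p n" "block_partition m p n G" "x \<in> config_space n" "y \<in> config_space n"
    "\<forall>i<m. block_magnetization n G x i = block_magnetization n G y i"
  shows "balanced n G (x, y)"
proof -
  have n: "0 < n"
    using assms(1) by (simp add: admissible_def)
  have "block_sum n G x i = block_sum n G y i" for i
  proof (cases "i < m")
    case True
    then show ?thesis
      using assms(5) n by (simp add: block_magnetization_eq)
  next
    case False
    then have "{v. v < n \<and> G v = i} = {}"
      using assms(2) by (auto simp: block_partition_def)
    then show ?thesis
      unfolding block_sum_def by (simp only: sum.empty)
  qed
  then show ?thesis
    using n assms(3,4) by auto
qed

lemma prob_not_coalesced_at_horizon_le:
  assumes "admissible m p n" "block_partition m p n G" "x \<in> config_space n" "y \<in> config_space n"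
    "\<forall>i<m. block_magnetization n G x i = block_magnetization n G y i"
    and k: "\<forall>i<m. \<forall>j<m. 0 \<le> k i j" and "0 \<le> \<beta>"
  defines "T \<equiv> horizon (1 / min_spin_prob \<beta> k m) n"
  shows "measure_pmf.prob (coupled_path_law (glauber_coupling \<beta> k n G) (x, y) T) (not_coalesced T) \<le> exp 1 / n"
proof -
  have bal: "balanced n G (x, y)"
    by (rule balanced_if_block_magnetization_eq[OF assms(1-5)])
  have G: "\<forall>v<n. G v < m" and n: "1 \<le> n"
    using assms(1,2) by (auto simp: block_partition_def admissible_def)
  have "measure_pmf.prob (coupled_path_law (glauber_coupling \<beta> k n G) (x, y) T) (not_coalesced T)
      \<le> (1 - 2 * min_spin_prob \<beta> k m / n) ^ T * n"
    by (rule prob_not_coalesced_glauber_coupling_le[OF bal G k assms(7)])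
  also have "\<dots> \<le> exp 1 / n"
    unfolding T_def by (rule contraction_at_horizon_le[OF min_spin_prob_bounds[OF k assms(7)] n])
  finally show ?thesis .
qed

lemma eventually_imp_less_if_le_null:
  fixes f g :: "nat \<Rightarrow> real"
  assumes "\<And>n. P n \<Longrightarrow> f n \<le> g n" "g \<longlonglongrightarrow> 0" "0 < \<epsilon>"
  shows "eventually (\<lambda>n. P n \<longrightarrow> f n < \<epsilon>) sequentially"
  using order_tendstoD(2)[OF assms(2,3)] by (rule eventually_mono) (use assms(1) in force)

theorem lemma4p13:
  fixes m :: nat and p :: "nat \<Rightarrow> real" and k :: "nat \<Rightarrow> nat \<Rightarrow> real" and \<beta> :: real
  assumes "m \<ge> 1"
    and "\<forall>i<m. p i > 0"
    and "(\<Sum>i<m. p i) = 1"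
    and "\<forall>i<m. \<forall>j<m. k i j = k j i"
    and "\<forall>i<m. \<forall>j<m. k i j > 0"
    and "\<beta> \<ge> 0"
  shows "\<exists>c>0. \<forall>(G :: nat \<Rightarrow> nat \<Rightarrow> nat) (\<sigma> :: nat \<Rightarrow> config) (\<sigma>' :: nat \<Rightarrow> config).
    (\<forall>n. admissible m p n \<longrightarrow>
        block_partition m p n (G n) \<and> \<sigma> n \<in> config_space n \<and> \<sigma>' n \<in> config_space n \<and>
        (\<forall>i<m. block_magnetization n (G n) (\<sigma> n) i = block_magnetization n (G n) (\<sigma>' n) i))
    \<longrightarrow> (\<exists>\<mu> :: nat \<Rightarrow> (config list \<times> config list) pmf.
          (\<forall>n. admissible m p n \<longrightarrow>
             map_pmf fst (\<mu> n) = path_law (glauber_step \<beta> k n (G n)) (\<sigma> n) (horizon c n) \<and>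
             map_pmf snd (\<mu> n) = path_law (glauber_step \<beta> k n (G n)) (\<sigma>' n) (horizon c n)) \<and>
          (\<forall>\<epsilon>>0. eventually (\<lambda>n. admissible m p n \<longrightarrow>
             measure_pmf.prob (\<mu> n) (not_coalesced (horizon c n)) < \<epsilon>) sequentially))"
proof -
  define c where "c = 1 / min_spin_prob \<beta> k m"
  have k: "\<forall>i<m. \<forall>j<m. 0 \<le> k i j"
    using assms(5) by (simp add: less_imp_le)
  show ?thesis
  proof (intro exI[of _ c] conjI allI impI)
    show "0 < c"
      using min_spin_prob_bounds[OF k assms(6)] by (simp add: c_def)
  next
    fix G :: "nat \<Rightarrow> nat \<Rightarrow> nat" and \<sigma> \<sigma>' :: "nat \<Rightarrow> config"
    assume H: "\<forall>n. admissible m p n \<longrightarrow>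
        block_partition m p n (G n) \<and> \<sigma> n \<in> config_space n \<and> \<sigma>' n \<in> config_space n \<and>
        (\<forall>i<m. block_magnetization n (G n) (\<sigma> n) i = block_magnetization n (G n) (\<sigma>' n) i)"
    let ?\<mu> = "\<lambda>n. coupled_path_law (glauber_coupling \<beta> k n (G n)) (\<sigma> n, \<sigma>' n) (horizon c n)"
    have bound: "measure_pmf.prob (?\<mu> n) (not_coalesced (horizon c n)) \<le> exp 1 / n"
      if "admissible m p n" for n
      unfolding c_def using H that
      by (intro prob_not_coalesced_at_horizon_le[OF that _ _ _ _ k assms(6)]) simp_all
    have null: "(\<lambda>n. exp 1 / real n) \<longlonglongrightarrow> 0"
      by real_asymp
    show "\<exists>\<mu>. (\<forall>n. admissible m p n \<longrightarrow>
          map_pmf fst (\<mu> n) = path_law (glauber_step \<beta> k n (G n)) (\<sigma> n) (horizon c n) \<and>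
          map_pmf snd (\<mu> n) = path_law (glauber_step \<beta> k n (G n)) (\<sigma>' n) (horizon c n)) \<and>
        (\<forall>\<epsilon>>0. eventually (\<lambda>n. admissible m p n \<longrightarrow>
          measure_pmf.prob (\<mu> n) (not_coalesced (horizon c n)) < \<epsilon>) sequentially)"
      by (intro exI[of _ ?\<mu>] conjI allI impI eventually_imp_less_if_le_null[OF bound null])
        (simp_all add: map_fst_coupled_path_law map_snd_coupled_path_law map_fst_glauber_coupling
          map_snd_glauber_coupling)
  qed
qed

end
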